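(* Let $A\in\{0,1\}$, $\varepsilon>0$, $c>\varepsilon$, and let $(R,W)$ be a solution of system (ODE) on $[\varepsilon,c)$ (with $R\in C^1$, $W\in C^2$) satisfying $$W(\varepsilon)<-1,\quad W'(\varepsilon)<0,\quad W''(\varepsilon)<0,\quad R(\varepsilon)>0.$$ Suppose $W(y)<-\frac13$ for all $y\in(\varepsilon,c)$ and $-2W(y)-R(y)>0$ for all $y\in(\varepsilon,c)$. Then $H(y):=W'(y)y+3W(y)+1<0$ for all $y\in(\varepsilon,c)$.
   Context: System (ODE) for $R(y),W(y)$, with $A\in\{0,1\}$: $R'(y)W(y)y=-R(y)\big(W'(y)y+3W(y)+1\big)$, $W''(y)W(y)y^2=\tfrac12(W(y)y)^2\big(W'(y)y+W(y)+1-R(y)\big)+(W'(y)y+1)^2+4W(y)+3W(y)^2-\tfrac A2\big(W'(y)y+3W(y)+1\big)$. *)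

theory Defs
  imports "HOL-Analysis.Analysis"
begin

end

theory Submission
  imports Defs
begin

text \<open>At a zero of \<open>H\<close> the second equation of the system reduces to
  \<open>y W(y) H'(y) = (y W(y))\<^sup>2 (-2W(y) - R(y)) / 2 > 0\<close>, and since \<open>W < 0\<close> this gives
  \<open>H'(y) < 0\<close>: \<open>H\<close> can only cross zero downwards. As \<open>H(\<epsilon>) < 0\<close>, it never reaches zero.\<close>

lemma first_zero_after_negative:
  fixes f :: "real \<Rightarrow> real"
  assumes "a \<le> b" and cont: "continuous_on {a..b} f" and "f a < 0" and "f b \<ge> 0"
  obtains x where "x \<in> {a<..b}" "f x = 0" "\<And>t. t \<in> {a..<x} \<Longrightarrow> f t < 0"
proof -
  define Z where "Z = {a..b} \<inter> f -` {0}"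
  obtain z where "z \<in> Z"
    using IVT'[of f a 0 b] assms unfolding Z_def by auto
  moreover have "closed Z"
    unfolding Z_def by (rule continuous_closed_preimage) (use cont in auto)
  moreover have bdd: "bdd_below Z" unfolding Z_def by (rule bdd_belowI[of _ a]) auto
  ultimately have "Inf Z \<in> Z" by (metis closed_contains_Inf empty_iff)
  then have x: "Inf Z \<in> {a<..b}" "f (Inf Z) = 0"
    using \<open>f a < 0\<close> unfolding Z_def by (auto simp: order.order_iff_strict)
  have "f t < 0" if t: "t \<in> {a..<Inf Z}" for t
  proof (rule ccontr)
    assume "\<not> f t < 0"
    moreover have "continuous_on {a..t} f"
      by (rule continuous_on_subset[OF cont]) (use t x in auto)
    ultimately obtain s where "a \<le> s" "s \<le> t" "f s = 0"
      using IVT'[of f a 0 t] \<open>f a < 0\<close> t by auto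
    then have "s \<in> Z" using t x unfolding Z_def by auto
    then show False using cInf_lower[OF _ bdd] \<open>s \<le> t\<close> t by fastforce
  qed
  then show ?thesis using that x by blast
qed

lemma negative_if_deriv_negative_at_zeros:
  fixes f f' :: "real \<Rightarrow> real"
  assumes cont: "continuous_on {a..<b} f" and "f a < 0"
    and deriv: "\<And>x. x \<in> {a<..<b} \<Longrightarrow> f x = 0 \<Longrightarrow> (f has_real_derivative f' x) (at x) \<and> f' x < 0"
    and "x1 \<in> {a..<b}"
  shows "f x1 < 0"
proof (rule ccontr)
  assume "\<not> f x1 < 0"
  then have "f x1 \<ge> 0" by simp
  moreover have "continuous_on {a..x1} f"
    by (rule continuous_on_subset[OF cont]) (use \<open>x1 \<in> {a..<b}\<close> in auto)
  moreover have "a \<le> x1" using \<open>x1 \<in> {a..<b}\<close> by simp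
  ultimately obtain x where x: "x \<in> {a<..x1}" "f x = 0" and neg: "\<And>t. t \<in> {a..<x} \<Longrightarrow> f t < 0"
    using first_zero_after_negative \<open>f a < 0\<close> by metis
  then have "x \<in> {a<..<b}" using \<open>x1 \<in> {a..<b}\<close> by auto
  with deriv \<open>f x = 0\<close> have "(f has_real_derivative f' x) (at x)" "f' x < 0" by auto
  then obtain d where "d > 0" and dec: "\<And>h. h > 0 \<Longrightarrow> h < d \<Longrightarrow> f x < f (x - h)"
    using DERIV_neg_dec_left by blast
  define h where "h = min (d / 2) ((x - a) / 2)"
  have "h > 0" "h < d" "h \<le> (x - a) / 2"
    using \<open>d > 0\<close> x(1) unfolding h_def by (simp_all add: min_def)
  then have "f x < f (x - h)" and "f (x - h) < 0"
    using dec neg by auto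
  then show False using \<open>f x = 0\<close> by simp
qed

text \<open>The term with \<open>A\<close> vanishes at a zero of \<open>H\<close>, so the value of \<open>A\<close> plays no role.\<close>

lemma ode_deriv_negative_at_zero:
  fixes A r w w1 w2 y :: real
  assumes "y > 0" "w < 0" "-2 * w - r > 0"
    and zero: "w1 * y + 3 * w + 1 = 0"
    and ode: "w2 * w * y^2 = 1/2 * (w * y)^2 * (w1 * y + w + 1 - r)
         + (w1 * y + 1)^2 + 4 * w + 3 * w^2 - A / 2 * (w1 * y + 3 * w + 1)"
  shows "w2 * y + 4 * w1 < 0"
proof -
  have w1y: "w1 * y = - 3 * w - 1" using zero by linarith
  have "w * (y * (w2 * y + 4 * w1)) = w2 * w * y^2 + 4 * w * (w1 * y)"
    by (simp add: power2_eq_square algebra_simps)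
  also have "\<dots> = 1/2 * (w * y)^2 * (-2 * w - r)"
    unfolding ode zero w1y by (simp add: power2_eq_square algebra_simps)
  also have "\<dots> > 0"
    using assms(1-3) by simp
  finally have "w * (y * (w2 * y + 4 * w1)) > 0" .
  then show ?thesis using assms(1,2) by (simp add: zero_less_mult_iff mult_less_0_iff)
qed

theorem mainTheorem8:
  fixes R R1 W W1 W2 :: "real \<Rightarrow> real" and A \<epsilon> c :: real
  assumes hA: "A \<in> {0, 1}"
    and heps: "\<epsilon> > 0" and hc: "c > \<epsilon>"
    and hR: "\<And>y. y \<in> {\<epsilon>..<c} \<Longrightarrow> (R has_real_derivative R1 y) (at y within {\<epsilon>..<c})"
    and hR1: "continuous_on {\<epsilon>..<c} R1"
    and hW: "\<And>y. y \<in> {\<epsilon>..<c} \<Longrightarrow> (W has_real_derivative W1 y) (at y within {\<epsilon>..<c})"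
    and hW1: "\<And>y. y \<in> {\<epsilon>..<c} \<Longrightarrow> (W1 has_real_derivative W2 y) (at y within {\<epsilon>..<c})"
    and hW2: "continuous_on {\<epsilon>..<c} W2"
    and ode1: "\<And>y. y \<in> {\<epsilon>..<c} \<Longrightarrow>
       R1 y * W y * y = - R y * (W1 y * y + 3 * W y + 1)"
    and ode2: "\<And>y. y \<in> {\<epsilon>..<c} \<Longrightarrow>
       W2 y * W y * y^2 = 1/2 * (W y * y)^2 * (W1 y * y + W y + 1 - R y)
         + (W1 y * y + 1)^2 + 4 * W y + 3 * (W y)^2
         - A / 2 * (W1 y * y + 3 * W y + 1)"
    and init: "W \<epsilon> < -1" "W1 \<epsilon> < 0" "W2 \<epsilon> < 0" "R \<epsilon> > 0"
    and hWb: "\<And>y. y \<in> {\<epsilon><..<c} \<Longrightarrow> W y < -1/3"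
    and hRW: "\<And>y. y \<in> {\<epsilon><..<c} \<Longrightarrow> -2 * W y - R y > 0"
  shows "\<forall>y \<in> {\<epsilon><..<c}. W1 y * y + 3 * W y + 1 < 0"
proof
  fix y0 assume "y0 \<in> {\<epsilon><..<c}"
  define H where "H y = W1 y * y + 3 * W y + 1" for y
  have dH: "(H has_real_derivative W2 y * y + 4 * W1 y) (at y within {\<epsilon>..<c})"
    if "y \<in> {\<epsilon>..<c}" for y
    unfolding H_def using hW[OF that] hW1[OF that] by (auto intro!: derivative_eq_intros)
  have H_start: "H \<epsilon> < 0"
    using init heps mult_neg_pos[of "W1 \<epsilon>" \<epsilon>] unfolding H_def by linarith
  have H_crosses_down: "(H has_real_derivative W2 y * y + 4 * W1 y) (at y) \<and> W2 y * y + 4 * W1 y < 0"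
    if y: "y \<in> {\<epsilon><..<c}" and "H y = 0" for y
  proof
    have "(H has_real_derivative W2 y * y + 4 * W1 y) (at y within {\<epsilon><..<c})"
      by (rule has_field_derivative_subset[OF dH]) (use y in auto)
    then show "(H has_real_derivative W2 y * y + 4 * W1 y) (at y)"
      using at_within_open[OF y open_greaterThanLessThan] by simp
    have "y > 0" "W y < 0" "y \<in> {\<epsilon>..<c}" using hWb[OF y] y heps by auto
    moreover have "W1 y * y + 3 * W y + 1 = 0" using \<open>H y = 0\<close> unfolding H_def .
    ultimately show "W2 y * y + 4 * W1 y < 0"
      using ode_deriv_negative_at_zero hRW[OF y] ode2 by blast
  qed
  have "y0 \<in> {\<epsilon>..<c}" using \<open>y0 \<in> {\<epsilon><..<c}\<close> by simp
  then have "H y0 < 0"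
    using negative_if_deriv_negative_at_zeros[OF DERIV_continuous_on[OF dH] H_start H_crosses_down]
    by blast
  then show "W1 y0 * y0 + 3 * W y0 + 1 < 0" unfolding H_def .
qed

end
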